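(* Let $\mathbf{L}$ be an intermediate propositional logic with $\vdash_{\mathbf{L}}\lnot A\lor\lnot\lnot A$ (for all $A$). Then the first $\varepsilon\tau$-theorem holds for negated formulas in $\varepsilon\tau(\mathbf{L})$: whenever $\vdash_{\varepsilon\tau(\mathbf{L})}\lnot A(e_1,\dots,e_n)$ for $\varepsilon$- or $\tau$-terms $e_1,\dots,e_n$, there are $\varepsilon\tau$-free terms $t_i^j$ such that $\vdash_{\mathbf{L}}\lnot A(t_1^1,\dots,t_n^1)\lor\dots\lor\lnot A(t_1^k,\dots,t_n^k)$. In particular this holds for $\varepsilon\tau(\mathbf{KC})$ and $\varepsilon\tau(\mathbf{LC})$.
   Context: Intermediate propositional logic: contains intuitionistic, contained in classical propositional logic, closed under modus ponens and substitution. $\mathbf{KC}$ is intuitionistic logic plus $\lnot A\lor\lnot\lnot A$; $\mathbf{LC}$ is intuitionistic logic plus $(A\to B)\lor(B\to A)$. $\varepsilon\tau$-terms: $\varepsilon x\,A(x)$, $\tau x\,A(x)$. Critical formulas: $A(t)\to A(\varepsilon x\,A(x))$ and $A(\tau x\,A(x))\to A(t)$. $\vdash_{\varepsilon\tau(\mathbf{L})}B$: derivable in the quantifier-free first-order language with $\varepsilon\tau$-terms from critical formulas using substitution instances of theorems of $\mathbf{L}$ and modus ponens; $\vdash_{\mathbf{L}}$: the same without critical formulas. A term is $\varepsilon\tau$-free if it contains no $\varepsilon\tau$-terms. *)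

theory Defs
  imports Main
begin

datatype pform = PVar nat | PBot | PAnd pform pform | POr pform pform | PImp pform pform

definition PNeg :: "pform \<Rightarrow> pform" where "PNeg A = PImp A PBot"

fun peval :: "(nat \<Rightarrow> bool) \<Rightarrow> pform \<Rightarrow> bool" where
  "peval v (PVar i) = v i"
| "peval v PBot = False"
| "peval v (PAnd A B) = (peval v A \<and> peval v B)"
| "peval v (POr A B) = (peval v A \<or> peval v B)"
| "peval v (PImp A B) = (peval v A \<longrightarrow> peval v B)"

definition CPC :: "pform set" where "CPC = {A. \<forall>v. peval v A}"

fun psubst :: "(nat \<Rightarrow> pform) \<Rightarrow> pform \<Rightarrow> pform" where
  "psubst s (PVar i) = s i"
| "psubst s PBot = PBot"
| "psubst s (PAnd A B) = PAnd (psubst s A) (psubst s B)"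
| "psubst s (POr A B) = POr (psubst s A) (psubst s B)"
| "psubst s (PImp A B) = PImp (psubst s A) (psubst s B)"

inductive_set ipc_axioms :: "pform set" where
  "PImp A (PImp B A) \<in> ipc_axioms"
| "PImp (PImp A (PImp B C)) (PImp (PImp A B) (PImp A C)) \<in> ipc_axioms"
| "PImp (PAnd A B) A \<in> ipc_axioms"
| "PImp (PAnd A B) B \<in> ipc_axioms"
| "PImp A (PImp B (PAnd A B)) \<in> ipc_axioms"
| "PImp A (POr A B) \<in> ipc_axioms"
| "PImp B (POr A B) \<in> ipc_axioms"
| "PImp (PImp A C) (PImp (PImp B C) (PImp (POr A B) C)) \<in> ipc_axioms"
| "PImp PBot A \<in> ipc_axioms"

inductive_set hilbert :: "pform set \<Rightarrow> pform set" for Ax :: "pform set" where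
  ax: "A \<in> ipc_axioms \<Longrightarrow> A \<in> hilbert Ax"
| extra: "A \<in> Ax \<Longrightarrow> A \<in> hilbert Ax"
| mp: "PImp A B \<in> hilbert Ax \<Longrightarrow> A \<in> hilbert Ax \<Longrightarrow> B \<in> hilbert Ax"

definition IPC :: "pform set" where "IPC = hilbert {}"

definition KC :: "pform set" where
  "KC = hilbert {POr (PNeg A) (PNeg (PNeg A)) | A. True}"

definition LC :: "pform set" where
  "LC = hilbert {POr (PImp A B) (PImp B A) | A B. True}"

definition intermediate_logic :: "pform set \<Rightarrow> bool" where
  "intermediate_logic L \<longleftrightarrow>
     IPC \<subseteq> L \<and> L \<subseteq> CPC \<and>
     (\<forall>A B. PImp A B \<in> L \<longrightarrow> A \<in> L \<longrightarrow> B \<in> L) \<and>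
     (\<forall>s A. A \<in> L \<longrightarrow> psubst s A \<in> L)"

text \<open>De Bruijn representation: variables are indices; Eps A and Tau A bind index 0 in A.\<close>
datatype trm = Var nat | Fn nat "trm list" | Eps fm | Tau fm
and fm = FBot | Atom nat "trm list" | FAnd fm fm | FOr fm fm | FImp fm fm

definition FNeg :: "fm \<Rightarrow> fm" where "FNeg A = FImp A FBot"

definition up_ren :: "(nat \<Rightarrow> nat) \<Rightarrow> nat \<Rightarrow> nat" where
  "up_ren r i = (case i of 0 \<Rightarrow> 0 | Suc j \<Rightarrow> Suc (r j))"

fun trename :: "(nat \<Rightarrow> nat) \<Rightarrow> trm \<Rightarrow> trm"
and frename :: "(nat \<Rightarrow> nat) \<Rightarrow> fm \<Rightarrow> fm" where
  "trename r (Var i) = Var (r i)"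
| "trename r (Fn f ts) = Fn f (map (trename r) ts)"
| "trename r (Eps A) = Eps (frename (up_ren r) A)"
| "trename r (Tau A) = Tau (frename (up_ren r) A)"
| "frename r FBot = FBot"
| "frename r (Atom p ts) = Atom p (map (trename r) ts)"
| "frename r (FAnd A B) = FAnd (frename r A) (frename r B)"
| "frename r (FOr A B) = FOr (frename r A) (frename r B)"
| "frename r (FImp A B) = FImp (frename r A) (frename r B)"

definition up_sub :: "(nat \<Rightarrow> trm) \<Rightarrow> nat \<Rightarrow> trm" where
  "up_sub s i = (case i of 0 \<Rightarrow> Var 0 | Suc j \<Rightarrow> trename Suc (s j))"

fun tsubst :: "(nat \<Rightarrow> trm) \<Rightarrow> trm \<Rightarrow> trm"
and fsubst :: "(nat \<Rightarrow> trm) \<Rightarrow> fm \<Rightarrow> fm" where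
  "tsubst s (Var i) = s i"
| "tsubst s (Fn f ts) = Fn f (map (tsubst s) ts)"
| "tsubst s (Eps A) = Eps (fsubst (up_sub s) A)"
| "tsubst s (Tau A) = Tau (fsubst (up_sub s) A)"
| "fsubst s FBot = FBot"
| "fsubst s (Atom p ts) = Atom p (map (tsubst s) ts)"
| "fsubst s (FAnd A B) = FAnd (fsubst s A) (fsubst s B)"
| "fsubst s (FOr A B) = FOr (fsubst s A) (fsubst s B)"
| "fsubst s (FImp A B) = FImp (fsubst s A) (fsubst s B)"

text \<open>A(t): instantiate the bound variable (index 0) of the body A by t.\<close>
definition inst :: "fm \<Rightarrow> trm \<Rightarrow> fm" where
  "inst A t = fsubst (\<lambda>i. case i of 0 \<Rightarrow> t | Suc j \<Rightarrow> Var j) A"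

fun tfree :: "trm \<Rightarrow> bool" and ffree :: "fm \<Rightarrow> bool" where
  "tfree (Var i) = True"
| "tfree (Fn f ts) = (\<forall>t\<in>set ts. tfree t)"
| "tfree (Eps A) = False"
| "tfree (Tau A) = False"
| "ffree FBot = True"
| "ffree (Atom p ts) = (\<forall>t\<in>set ts. tfree t)"
| "ffree (FAnd A B) = (ffree A \<and> ffree B)"
| "ffree (FOr A B) = (ffree A \<and> ffree B)"
| "ffree (FImp A B) = (ffree A \<and> ffree B)"

definition is_et_term :: "trm \<Rightarrow> bool" where
  "is_et_term t \<longleftrightarrow> (\<exists>A. t = Eps A \<or> t = Tau A)"

fun pinst :: "(nat \<Rightarrow> fm) \<Rightarrow> pform \<Rightarrow> fm" where
  "pinst s (PVar i) = s i"
| "pinst s PBot = FBot"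
| "pinst s (PAnd A B) = FAnd (pinst s A) (pinst s B)"
| "pinst s (POr A B) = FOr (pinst s A) (pinst s B)"
| "pinst s (PImp A B) = FImp (pinst s A) (pinst s B)"

text \<open>derives L True B: provable in epsilon-tau(L) (critical formulas allowed);
  derives L False B: provable in L (no critical formulas).\<close>
inductive derives :: "pform set \<Rightarrow> bool \<Rightarrow> fm \<Rightarrow> bool" for L :: "pform set" where
  thm_inst: "P \<in> L \<Longrightarrow> derives L c (pinst s P)"
| crit_eps: "c \<Longrightarrow> derives L c (FImp (inst A t) (inst A (Eps A)))"
| crit_tau: "c \<Longrightarrow> derives L c (FImp (inst A (Tau A)) (inst A t))"
| mp: "derives L c (FImp A B) \<Longrightarrow> derives L c A \<Longrightarrow> derives L c B"

abbreviation derives_et :: "pform set \<Rightarrow> fm \<Rightarrow> bool" where "derives_et L \<equiv> derives L True"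
abbreviation derives_L :: "pform set \<Rightarrow> fm \<Rightarrow> bool" where "derives_L L \<equiv> derives L False"

fun FDisj :: "fm list \<Rightarrow> fm" where
  "FDisj [] = FBot"
| "FDisj [A] = A"
| "FDisj (A # As) = FOr A (FDisj As)"

text \<open>A(t_1,...,t_n): replace variables 0..n-1 of A by the given terms, others unchanged.\<close>
definition inst_n :: "fm \<Rightarrow> nat \<Rightarrow> (nat \<Rightarrow> trm) \<Rightarrow> fm" where
  "inst_n A n e = fsubst (\<lambda>i. if i < n then e i else Var i) A"

definition first_et_theorem_neg :: "pform set \<Rightarrow> bool" where
  "first_et_theorem_neg L \<longleftrightarrow>
    (\<forall>A n e. ffree A \<and> (\<forall>i<n. is_et_term (e i)) \<and> derives_et L (FNeg (inst_n A n e))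
       \<longrightarrow> (\<exists>ts. ts \<noteq> [] \<and> (\<forall>u\<in>set ts. \<forall>i<n. tfree (u i)) \<and>
               derives_L L (FDisj (map (\<lambda>u. FNeg (inst_n A n u)) ts))))"

end

theory Submission
  imports Defs "HOL-Analysis.Analysis"
begin

(* Interpret the language in the Herbrand universe of epsilon-tau-free terms: under a valuation of
   the atoms, an epsilon-term denotes an epsilon-tau-free witness of its body if there is one, and a
   tau-term an epsilon-tau-free counterexample. Every critical formula is then true, so every theorem
   of epsilon-tau(L) holds in each such model whenever L is classically sound.
   Hence, if not A(e) is provable, no valuation satisfies all instances A(u) with epsilon-tau-free u,
   for the values of e would be such a u. By propositional compactness finitely many instances
   A(u_1), ..., A(u_k) are jointly unsatisfiable, so by Glivenko's argument they are refutable
   intuitionistically. Weak excluded middle (wem), not C or not not C, turns a refutation of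
   C_1, ..., C_k into a proof of not C_1 or ... or not C_k. *)

section \<open>Herbrand models of epsilon-tau-terms\<close>

type_synonym valuation = "nat \<times> trm list \<Rightarrow> bool"

primrec teval :: "valuation \<Rightarrow> trm \<Rightarrow> (nat \<Rightarrow> trm) \<Rightarrow> trm"
  and feval :: "valuation \<Rightarrow> fm \<Rightarrow> (nat \<Rightarrow> trm) \<Rightarrow> bool" where
  "teval V (Var i) \<rho> = \<rho> i"
| "teval V (Fn f ts) \<rho> = Fn f (map (\<lambda>t. teval V t \<rho>) ts)"
| "teval V (Eps A) \<rho> =
    (if \<exists>d. tfree d \<and> feval V A (case_nat d \<rho>)
     then SOME d. tfree d \<and> feval V A (case_nat d \<rho>) else Var 0)"
| "teval V (Tau A) \<rho> =
    (if \<exists>d. tfree d \<and> \<not> feval V A (case_nat d \<rho>)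
     then SOME d. tfree d \<and> \<not> feval V A (case_nat d \<rho>) else Var 0)"
| "feval V FBot \<rho> = False"
| "feval V (Atom p ts) \<rho> = V (p, map (\<lambda>t. teval V t \<rho>) ts)"
| "feval V (FAnd A B) \<rho> = (feval V A \<rho> \<and> feval V B \<rho>)"
| "feval V (FOr A B) \<rho> = (feval V A \<rho> \<or> feval V B \<rho>)"
| "feval V (FImp A B) \<rho> = (feval V A \<rho> \<longrightarrow> feval V B \<rho>)"

lemma tfree_teval: "(\<And>i. tfree (\<rho> i)) \<Longrightarrow> tfree (teval V t \<rho>)"
  by (induction t arbitrary: \<rho> rule: trm.induct[where ?P2.0 = "\<lambda>_. True"])
    (auto intro: someI2_ex)

lemma case_nat_comp_up_ren: "case_nat d \<rho> \<circ> up_ren r = case_nat d (\<rho> \<circ> r)"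
  by (rule ext) (simp add: up_ren_def split: nat.split)

lemma teval_trename: "teval V (trename r t) \<rho> = teval V t (\<rho> \<circ> r)"
  and feval_frename: "feval V (frename r A) \<rho> = feval V A (\<rho> \<circ> r)"
  by (induction t and A arbitrary: r \<rho> and r \<rho>)
    (auto simp: case_nat_comp_up_ren cong: map_cong)

lemma teval_up_sub:
  "(\<lambda>i. teval V (up_sub s i) (case_nat d \<rho>)) = case_nat d (\<lambda>i. teval V (s i) \<rho>)"
  by (rule ext) (simp add: up_sub_def teval_trename comp_def split: nat.split)

lemma teval_tsubst: "teval V (tsubst s t) \<rho> = teval V t (\<lambda>i. teval V (s i) \<rho>)"
  and feval_fsubst: "feval V (fsubst s A) \<rho> = feval V A (\<lambda>i. teval V (s i) \<rho>)"
  by (induction t and A arbitrary: s \<rho> and s \<rho>) (auto simp: teval_up_sub cong: map_cong)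

lemma feval_inst: "feval V (inst A t) \<rho> = feval V A (case_nat (teval V t \<rho>) \<rho>)"
proof -
  have "(\<lambda>i. teval V (case i of 0 \<Rightarrow> t | Suc j \<Rightarrow> Var j) \<rho>) = case_nat (teval V t \<rho>) \<rho>"
    by (rule ext) (simp split: nat.split)
  then show ?thesis by (simp add: inst_def feval_fsubst)
qed

lemma feval_pinst: "feval V (pinst s P) \<rho> = peval (\<lambda>i. feval V (s i) \<rho>) P"
  by (induction P) auto

theorem derives_sound:
  assumes "L \<subseteq> CPC" and "derives L c B" and "\<And>i. tfree (\<rho> i)"
  shows "feval V B \<rho>"
  using assms(2,3)
proof (induction arbitrary: \<rho> rule: derives.induct)
  case (thm_inst P c s)
  then show ?case using assms(1) by (auto simp: CPC_def feval_pinst)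
next
  case (crit_eps c A t)
  then show ?case by (auto simp: feval_inst intro: someI2_ex tfree_teval)
next
  case (crit_tau c A t)
  let ?d = "teval V t \<rho>"
  have "feval V A (case_nat ?d \<rho>)" if tau: "feval V A (case_nat (teval V (Tau A) \<rho>) \<rho>)"
  proof (rule ccontr)
    assume "\<not> feval V A (case_nat ?d \<rho>)"
    moreover have "tfree ?d" using crit_tau.prems by (rule tfree_teval)
    ultimately have ex: "\<exists>d. tfree d \<and> \<not> feval V A (case_nat d \<rho>)" by blast
    from someI_ex[OF ex] ex tau show False by simp
  qed
  then show ?case by (simp add: feval_inst)
qed auto

section \<open>Derivations from hypotheses\<close>

inductive derives_from :: "pform set \<Rightarrow> fm set \<Rightarrow> fm \<Rightarrow> bool" for L \<Gamma> where
  base: "derives_L L B \<Longrightarrow> derives_from L \<Gamma> B"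
| hyp: "B \<in> \<Gamma> \<Longrightarrow> derives_from L \<Gamma> B"
| mp: "derives_from L \<Gamma> (FImp A B) \<Longrightarrow> derives_from L \<Gamma> A \<Longrightarrow> derives_from L \<Gamma> B"

lemma derives_from_empty: "derives_from L {} B \<Longrightarrow> derives_L L B"
  by (induction rule: derives_from.induct) (auto intro: derives.mp)

lemma derives_from_mono: "derives_from L \<Gamma> B \<Longrightarrow> \<Gamma> \<subseteq> \<Delta> \<Longrightarrow> derives_from L \<Delta> B"
  by (induction rule: derives_from.induct) (auto intro: derives_from.intros)

lemma derives_from_weaken: "derives_from L \<Gamma> B \<Longrightarrow> derives_from L (insert A \<Gamma>) B"
  by (erule derives_from_mono) auto

lemma derives_from_assm: "derives_from L (insert A \<Gamma>) A"
  by (rule derives_from.hyp) simp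

lemma derives_from_mp2:
  "derives_from L \<Gamma> (FImp A (FImp B C)) \<Longrightarrow> derives_from L \<Gamma> A \<Longrightarrow> derives_from L \<Gamma> B
   \<Longrightarrow> derives_from L \<Gamma> C"
  by (meson derives_from.mp)

lemma derives_from_negE:
  "derives_from L \<Gamma> (FNeg A) \<Longrightarrow> derives_from L \<Gamma> A \<Longrightarrow> derives_from L \<Gamma> FBot"
  unfolding FNeg_def by (rule derives_from.mp)

locale superintuitionistic =
  fixes L :: "pform set"
  assumes IPC_subset: "IPC \<subseteq> L"
begin

lemma derives_from_ipc_axiom: "P \<in> ipc_axioms \<Longrightarrow> derives_from L \<Gamma> (pinst s P)"
  using IPC_subset unfolding IPC_def by (auto intro!: derives_from.base derives.thm_inst hilbert.ax)

lemma derives_from_K: "derives_from L \<Gamma> (FImp A (FImp B A))"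
  using derives_from_ipc_axiom[OF ipc_axioms.intros(1)[of "PVar 0" "PVar 1"], of \<Gamma> "(!) [A, B]"]
  by simp

lemma derives_from_S: "derives_from L \<Gamma> (FImp (FImp A (FImp B C)) (FImp (FImp A B) (FImp A C)))"
  using derives_from_ipc_axiom[OF ipc_axioms.intros(2)[of "PVar 0" "PVar 1" "PVar 2"],
      of \<Gamma> "(!) [A, B, C]"]
  by simp

lemma derives_from_impI: "derives_from L (insert A \<Gamma>) B \<Longrightarrow> derives_from L \<Gamma> (FImp A B)"
proof (induction rule: derives_from.induct)
  case (base B)
  then show ?case by (meson derives_from_K derives_from.base derives_from.mp)
next
  case (hyp B)
  show ?case
  proof (cases "B = A")
    case True
    then show ?thesis
      using derives_from_K[of \<Gamma> A "FImp A A"] derives_from_K[of \<Gamma> A A]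
        derives_from_S[of \<Gamma> A "FImp A A" A]
      by (meson derives_from.mp)
  next
    case False
    then show ?thesis
      using hyp derives_from_K[of \<Gamma> B A] by (meson derives_from.hyp derives_from.mp insertE)
  qed
next
  case (mp B C)
  then show ?case by (meson derives_from_S derives_from_mp2)
qed

lemma derives_from_conjI:
  "derives_from L \<Gamma> A \<Longrightarrow> derives_from L \<Gamma> B \<Longrightarrow> derives_from L \<Gamma> (FAnd A B)"
  using derives_from_ipc_axiom[OF ipc_axioms.intros(5)[of "PVar 0" "PVar 1"], of \<Gamma> "(!) [A, B]"]
  by (auto intro: derives_from_mp2)

lemma derives_from_conjD1: "derives_from L \<Gamma> (FAnd A B) \<Longrightarrow> derives_from L \<Gamma> A"
  using derives_from_ipc_axiom[OF ipc_axioms.intros(3)[of "PVar 0" "PVar 1"], of \<Gamma> "(!) [A, B]"]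
  by (auto intro: derives_from.mp)

lemma derives_from_conjD2: "derives_from L \<Gamma> (FAnd A B) \<Longrightarrow> derives_from L \<Gamma> B"
  using derives_from_ipc_axiom[OF ipc_axioms.intros(4)[of "PVar 0" "PVar 1"], of \<Gamma> "(!) [A, B]"]
  by (auto intro: derives_from.mp)

lemma derives_from_disjI1: "derives_from L \<Gamma> A \<Longrightarrow> derives_from L \<Gamma> (FOr A B)"
  using derives_from_ipc_axiom[OF ipc_axioms.intros(6)[of "PVar 0" "PVar 1"], of \<Gamma> "(!) [A, B]"]
  by (auto intro: derives_from.mp)

lemma derives_from_disjI2: "derives_from L \<Gamma> B \<Longrightarrow> derives_from L \<Gamma> (FOr A B)"
  using derives_from_ipc_axiom[OF ipc_axioms.intros(7)[of "PVar 0" "PVar 1"], of \<Gamma> "(!) [B, A]"]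
  by (auto intro: derives_from.mp)

lemma derives_from_disjE:
  assumes "derives_from L \<Gamma> (FOr A B)"
    and "derives_from L (insert A \<Gamma>) C" and "derives_from L (insert B \<Gamma>) C"
  shows "derives_from L \<Gamma> C"
proof -
  have "derives_from L \<Gamma> (FImp (FImp A C) (FImp (FImp B C) (FImp (FOr A B) C)))"
    using derives_from_ipc_axiom[OF ipc_axioms.intros(8)[of "PVar 0" "PVar 2" "PVar 1"],
        of \<Gamma> "(!) [A, B, C]"]
    by simp
  with assms show ?thesis by (meson derives_from_impI derives_from_mp2 derives_from.mp)
qed

lemma derives_from_botE: "derives_from L \<Gamma> FBot \<Longrightarrow> derives_from L \<Gamma> A"
  using derives_from_ipc_axiom[OF ipc_axioms.intros(9)[of "PVar 0"], of \<Gamma> "\<lambda>_. A"]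
  by (auto intro: derives_from.mp)

lemma derives_from_negI: "derives_from L (insert A \<Gamma>) FBot \<Longrightarrow> derives_from L \<Gamma> (FNeg A)"
  unfolding FNeg_def by (rule derives_from_impI)

end

section \<open>Glivenko's theorem for finite sets of hypotheses\<close>

fun prop_eval :: "valuation \<Rightarrow> fm \<Rightarrow> bool" where
  "prop_eval V FBot = False"
| "prop_eval V (Atom p ts) = V (p, ts)"
| "prop_eval V (FAnd A B) = (prop_eval V A \<and> prop_eval V B)"
| "prop_eval V (FOr A B) = (prop_eval V A \<or> prop_eval V B)"
| "prop_eval V (FImp A B) = (prop_eval V A \<longrightarrow> prop_eval V B)"

fun atoms :: "fm \<Rightarrow> (nat \<times> trm list) set" where
  "atoms FBot = {}"
| "atoms (Atom p ts) = {(p, ts)}"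
| "atoms (FAnd A B) = atoms A \<union> atoms B"
| "atoms (FOr A B) = atoms A \<union> atoms B"
| "atoms (FImp A B) = atoms A \<union> atoms B"

lemma finite_atoms: "finite (atoms B)"
  by (induction B rule: atoms.induct) auto

definition signed :: "valuation \<Rightarrow> fm \<Rightarrow> fm" where
  "signed V B = (if prop_eval V B then B else FNeg B)"

definition literal :: "valuation \<Rightarrow> nat \<times> trm list \<Rightarrow> fm" where
  "literal V a = signed V (Atom (fst a) (snd a))"

context superintuitionistic
begin

lemma derives_from_signed_FAnd:
  assumes A: "derives_from L \<Gamma> (signed V A)" and B: "derives_from L \<Gamma> (signed V B)"
  shows "derives_from L \<Gamma> (signed V (FAnd A B))"
proof -
  consider "prop_eval V A" "prop_eval V B" | "prop_eval V A" "\<not> prop_eval V B"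
    | "\<not> prop_eval V A"
    by blast
  then show ?thesis
  proof cases
    case 1
    with A B show ?thesis by (simp add: signed_def derives_from_conjI)
  next
    case 2
    with B show ?thesis
      by (simp add: signed_def)
        (meson derives_from_negI derives_from_negE derives_from_conjD2
          derives_from_assm derives_from_weaken)
  next
    case 3
    with A show ?thesis
      by (simp add: signed_def)
        (meson derives_from_negI derives_from_negE derives_from_conjD1
          derives_from_assm derives_from_weaken)
  qed
qed

lemma derives_from_signed_FOr:
  assumes A: "derives_from L \<Gamma> (signed V A)" and B: "derives_from L \<Gamma> (signed V B)"
  shows "derives_from L \<Gamma> (signed V (FOr A B))"
proof -
  consider "prop_eval V A" | "prop_eval V B" | "\<not> prop_eval V A" "\<not> prop_eval V B"
    by blast
  then show ?thesis
  proof cases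
    case 1
    with A show ?thesis by (simp add: signed_def derives_from_disjI1)
  next
    case 2
    with B show ?thesis by (simp add: signed_def derives_from_disjI2)
  next
    case 3
    with A B show ?thesis
      by (simp add: signed_def)
        (meson derives_from_negI derives_from_negE derives_from_disjE
          derives_from_assm derives_from_weaken)
  qed
qed

lemma derives_from_signed_FImp:
  assumes A: "derives_from L \<Gamma> (signed V A)" and B: "derives_from L \<Gamma> (signed V B)"
  shows "derives_from L \<Gamma> (signed V (FImp A B))"
proof -
  consider "prop_eval V B" | "prop_eval V A" "\<not> prop_eval V B" | "\<not> prop_eval V A"
    by blast
  then show ?thesis
  proof cases
    case 1
    with B show ?thesis
      by (simp add: signed_def derives_from_impI derives_from_weaken)
  next
    case 2
    with A B show ?thesis
      by (simp add: signed_def)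
        (meson derives_from_negI derives_from_negE derives_from.mp
          derives_from_assm derives_from_weaken)
  next
    case 3
    with A show ?thesis
      by (simp add: signed_def)
        (meson derives_from_impI derives_from_botE derives_from_negE
          derives_from_assm derives_from_weaken)
  qed
qed

lemma derives_from_signed: "atoms B \<subseteq> X \<Longrightarrow> derives_from L (literal V ` X) (signed V B)"
proof (induction B rule: atoms.induct)
  case 1
  then show ?case
    by (simp add: signed_def) (meson derives_from_negI derives_from_assm)
next
  case (2 p ts)
  then show ?case by (force simp: literal_def intro: derives_from.hyp)
qed (auto intro: derives_from_signed_FAnd derives_from_signed_FOr derives_from_signed_FImp)

lemma literal_fun_upd_image: "a \<notin> Y \<Longrightarrow> literal (V(a := b)) ` Y = literal V ` Y"
  by (auto simp: literal_def signed_def intro!: image_cong)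

(* Splitting on an atom P is intuitionistically sound for refutations: from Delta, P |- False
   and Delta, not P |- False we get Delta |- not P and Delta |- not not P. *)
lemma derives_from_bot_elim_literals:
  "finite Y \<Longrightarrow> (\<And>V. derives_from L (literal V ` Y \<union> \<Delta>) FBot) \<Longrightarrow> derives_from L \<Delta> FBot"
proof (induction Y rule: finite_induct)
  case (insert a Y)
  have "derives_from L (literal V ` Y \<union> \<Delta>) FBot" for V
  proof -
    let ?P = "Atom (fst a) (snd a)"
    have split: "derives_from L (insert (literal (V(a := b)) a) (literal V ` Y \<union> \<Delta>)) FBot" for b
      using insert.prems[of "V(a := b)"] literal_fun_upd_image[OF insert.hyps(2), of V b]
      by (metis Un_insert_left image_insert)
    from split[of True] split[of False]
    have "derives_from L (insert ?P (literal V ` Y \<union> \<Delta>)) FBot"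
      and "derives_from L (insert (FNeg ?P) (literal V ` Y \<union> \<Delta>)) FBot"
      by (simp_all add: literal_def signed_def)
    then show ?thesis by (meson derives_from_negI derives_from_negE)
  qed
  then show ?case by (rule insert.IH)
qed simp

lemma derives_from_bot_if_unsat:
  assumes "finite \<Gamma>" and unsat: "\<not> (\<exists>V. \<forall>C\<in>\<Gamma>. prop_eval V C)"
  shows "derives_from L \<Gamma> FBot"
proof (rule derives_from_bot_elim_literals)
  let ?X = "\<Union> (atoms ` \<Gamma>)"
  show "finite ?X" using \<open>finite \<Gamma>\<close> by (simp add: finite_atoms)
  fix V
  obtain C where C: "C \<in> \<Gamma>" "\<not> prop_eval V C" using unsat by blast
  then have "derives_from L (literal V ` ?X) (FNeg C)"
    using derives_from_signed[of C ?X V] by (auto simp: signed_def)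
  then have "derives_from L (literal V ` ?X \<union> \<Gamma>) (FNeg C)"
    by (rule derives_from_mono) auto
  moreover have "derives_from L (literal V ` ?X \<union> \<Gamma>) C"
    using C by (auto intro: derives_from.hyp)
  ultimately show "derives_from L (literal V ` ?X \<union> \<Gamma>) FBot"
    by (rule derives_from_negE)
qed

lemma derives_from_FDisj_FNeg:
  assumes wem: "\<And>A. derives_L L (FOr (FNeg A) (FNeg (FNeg A)))"
  shows "Cs \<noteq> [] \<Longrightarrow> derives_from L (set Cs \<union> \<Gamma>) FBot
    \<Longrightarrow> derives_from L \<Gamma> (FDisj (map FNeg Cs))"
proof (induction Cs arbitrary: \<Gamma>)
  case (Cons C Cs)
  show ?case
  proof (cases "Cs = []")
    case True
    with Cons.prems show ?thesis by (simp add: derives_from_negI)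
  next
    case False
    have "derives_from L (set Cs \<union> \<Gamma>) (FNeg C)"
      using Cons.prems by (simp add: derives_from_negI)
    then have "derives_from L (insert (FNeg (FNeg C)) (set Cs \<union> \<Gamma>)) FBot"
      by (meson derives_from_negE derives_from_assm derives_from_weaken)
    then have "derives_from L (set Cs \<union> insert (FNeg (FNeg C)) \<Gamma>) FBot"
      by simp
    then have "derives_from L (insert (FNeg (FNeg C)) \<Gamma>) (FDisj (map FNeg Cs))"
      by (rule Cons.IH[OF False])
    moreover have "derives_from L \<Gamma> (FOr (FNeg C) (FNeg (FNeg C)))"
      by (rule derives_from.base[OF wem])
    moreover have "FDisj (map FNeg (C # Cs)) = FOr (FNeg C) (FDisj (map FNeg Cs))"
      using False by (cases Cs) auto
    ultimately show ?thesis
      by (metis derives_from_disjE derives_from_disjI1 derives_from_disjI2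
          derives_from_assm)
  qed
qed simp

end

section \<open>Propositional compactness\<close>

abbreviation valuation_topology :: "valuation topology" where
  "valuation_topology \<equiv> product_topology (\<lambda>_. discrete_topology UNIV) UNIV"

lemma closedin_prop_eval:
  "closedin valuation_topology {V. prop_eval V B}
   \<and> closedin valuation_topology {V. \<not> prop_eval V B}"
proof (induction B rule: atoms.induct)
  case (2 p ts)
  have "closedin valuation_topology {V \<in> topspace valuation_topology. V (p, ts) \<in> {b}}" for b
    by (rule closedin_continuous_map_preimage[OF continuous_map_product_projection]) auto
  from this[of True] this[of False] show ?case by simp
next
  case (3 A B)
  have "{V. prop_eval V (FAnd A B)} = {V. prop_eval V A} \<inter> {V. prop_eval V B}"
    "{V. \<not> prop_eval V (FAnd A B)} = {V. \<not> prop_eval V A} \<union> {V. \<not> prop_eval V B}"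
    by auto
  with 3 show ?case by (metis closedin_Int closedin_Un)
next
  case (4 A B)
  have "{V. prop_eval V (FOr A B)} = {V. prop_eval V A} \<union> {V. prop_eval V B}"
    "{V. \<not> prop_eval V (FOr A B)} = {V. \<not> prop_eval V A} \<inter> {V. \<not> prop_eval V B}"
    by auto
  with 4 show ?case by (metis closedin_Int closedin_Un)
next
  case (5 A B)
  have "{V. prop_eval V (FImp A B)} = {V. \<not> prop_eval V A} \<union> {V. prop_eval V B}"
    "{V. \<not> prop_eval V (FImp A B)} = {V. prop_eval V A} \<inter> {V. \<not> prop_eval V B}"
    by auto
  with 5 show ?case by (metis closedin_Int closedin_Un)
qed (use closedin_topspace[of valuation_topology] in simp)

theorem prop_compactness:
  assumes "\<And>G. G \<subseteq> S \<Longrightarrow> finite G \<Longrightarrow> \<exists>V. \<forall>B\<in>G. prop_eval V B"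
  shows "\<exists>V. \<forall>B\<in>S. prop_eval V B"
proof -
  let ?models = "\<lambda>B. {V. prop_eval V B}"
  have "compact_space valuation_topology"
    by (simp add: compact_space_product_topology compact_space_discrete_topology)
  moreover have "\<forall>C\<in>?models ` S. closedin valuation_topology C"
    using closedin_prop_eval by blast
  moreover have "\<Inter>\<F> \<noteq> {}" if fin: "finite \<F>" and sub: "\<F> \<subseteq> ?models ` S" for \<F>
  proof -
    obtain G where G: "G \<subseteq> S" "finite G" "\<F> = ?models ` G"
      using finite_subset_image[OF fin sub] by blast
    then obtain V where "\<forall>B\<in>G. prop_eval V B" using assms by blast
    with G(3) show ?thesis by blast
  qed
  ultimately have "\<Inter>(?models ` S) \<noteq> {}"
    unfolding compact_space_fip by blast
  then show ?thesis by blast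
qed

lemma unsat_image_finite_list:
  assumes "\<not> (\<exists>V. \<forall>u\<in>U. prop_eval V (f u))"
  obtains us where "us \<noteq> []" and "set us \<subseteq> U" and "\<not> (\<exists>V. \<forall>u\<in>set us. prop_eval V (f u))"
proof -
  have "\<not> (\<exists>V. \<forall>B\<in>f ` U. prop_eval V B)"
    using assms by simp
  then obtain G where G: "G \<subseteq> f ` U" "finite G" "\<not> (\<exists>V. \<forall>B\<in>G. prop_eval V B)"
    by (meson prop_compactness)
  obtain U0 where U0: "U0 \<subseteq> U" "finite U0" "G = f ` U0"
    using finite_subset_image[OF G(2,1)] by blast
  obtain us where "set us = U0"
    using finite_list[OF U0(2)] by blast
  with G(3) U0 show ?thesis
    by (intro that[of us]) auto
qed

lemma teval_tfree: "tfree t \<Longrightarrow> teval V t \<sigma> = tsubst \<sigma> t"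
  and feval_ffree: "ffree A \<Longrightarrow> feval V A \<sigma> = prop_eval V (fsubst \<sigma> A)"
  by (induction t and A) (auto cong: map_cong)

lemma epsilon_tau_free_instances_unsat:
  assumes "L \<subseteq> CPC" and "ffree A" and "derives_et L (FNeg (inst_n A n e))"
  shows "\<not> (\<exists>V. \<forall>u\<in>{u. \<forall>i<n. tfree (u i)}. prop_eval V (inst_n A n u))"
proof
  assume "\<exists>V. \<forall>u\<in>{u. \<forall>i<n. tfree (u i)}. prop_eval V (inst_n A n u)"
  then obtain V where V: "\<And>u. \<forall>i<n. tfree (u i) \<Longrightarrow> prop_eval V (inst_n A n u)"
    by blast
  define u where "u i = teval V (e i) Var" for i
  have "\<not> feval V (inst_n A n e) Var"
    using derives_sound[OF assms(1) assms(3), of Var V] by (simp add: FNeg_def)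
  moreover have "feval V (inst_n A n e) Var = feval V A (\<lambda>i. if i < n then u i else Var i)"
    unfolding inst_n_def feval_fsubst by (rule arg_cong[where f = "feval V A"]) (auto simp: u_def)
  moreover have "\<dots> = prop_eval V (inst_n A n u)"
    using \<open>ffree A\<close> by (simp add: feval_ffree inst_n_def)
  moreover have "\<forall>i<n. tfree (u i)"
    by (simp add: u_def tfree_teval)
  ultimately show False using V by simp
qed

theorem (in superintuitionistic) first_et_theorem_neg_if_wem:
  assumes "L \<subseteq> CPC" and wem: "\<And>A. derives_L L (FOr (FNeg A) (FNeg (FNeg A)))"
  shows "first_et_theorem_neg L"
  unfolding first_et_theorem_neg_def
proof (intro allI impI, elim conjE)
  fix A n e
  assume "ffree A" and "derives_et L (FNeg (inst_n A n e))"
  with \<open>L \<subseteq> CPC\<close> have "\<not> (\<exists>V. \<forall>u\<in>{u. \<forall>i<n. tfree (u i)}. prop_eval V (inst_n A n u))"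
    by (rule epsilon_tau_free_instances_unsat)
  then obtain us where us: "us \<noteq> []" "set us \<subseteq> {u. \<forall>i<n. tfree (u i)}"
    "\<not> (\<exists>V. \<forall>u\<in>set us. prop_eval V (inst_n A n u))"
    by (rule unsat_image_finite_list)
  then have "derives_from L (set (map (inst_n A n) us) \<union> {}) FBot"
    by (intro derives_from_bot_if_unsat) auto
  with \<open>us \<noteq> []\<close> have "derives_from L {} (FDisj (map FNeg (map (inst_n A n) us)))"
    by (intro derives_from_FDisj_FNeg[OF wem]) auto
  with us show "\<exists>ts. ts \<noteq> [] \<and> (\<forall>u\<in>set ts. \<forall>i<n. tfree (u i))
    \<and> derives_L L (FDisj (map (\<lambda>u. FNeg (inst_n A n u)) ts))"
    by (intro exI[of _ us]) (auto simp: comp_def dest: derives_from_empty)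
qed

lemma hilbert_mono: "A \<in> hilbert Ax \<Longrightarrow> Ax \<subseteq> Bx \<Longrightarrow> A \<in> hilbert Bx"
  by (induction rule: hilbert.induct) (auto intro: hilbert.intros)

lemma superintuitionistic_hilbert: "superintuitionistic (hilbert Ax)"
  unfolding superintuitionistic_def IPC_def by (auto elim: hilbert_mono)

lemma ipc_axioms_CPC: "ipc_axioms \<subseteq> CPC"
proof
  fix A assume "A \<in> ipc_axioms"
  then show "A \<in> CPC" by (induction rule: ipc_axioms.induct) (auto simp: CPC_def)
qed

lemma hilbert_subset_CPC:
  assumes "Ax \<subseteq> CPC"
  shows "hilbert Ax \<subseteq> CPC"
proof
  fix A assume "A \<in> hilbert Ax"
  then show "A \<in> CPC"
    using assms ipc_axioms_CPC by (induction rule: hilbert.induct) (auto simp: CPC_def)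
qed

lemma KC_subset_CPC: "KC \<subseteq> CPC"
  unfolding KC_def by (rule hilbert_subset_CPC) (auto simp: CPC_def PNeg_def)

lemma LC_subset_CPC: "LC \<subseteq> CPC"
  unfolding LC_def by (rule hilbert_subset_CPC) (auto simp: CPC_def)

lemma derives_wem:
  assumes "POr (PNeg (PVar 0)) (PNeg (PNeg (PVar 0))) \<in> L"
  shows "derives_L L (FOr (FNeg A) (FNeg (FNeg A)))"
  using derives.thm_inst[OF assms, of False "\<lambda>_. A"] by (simp add: PNeg_def FNeg_def)

lemma KC_wem: "derives_L KC (FOr (FNeg A) (FNeg (FNeg A)))"
  by (rule derives_wem) (auto simp: KC_def intro: hilbert.extra)

lemma LC_wem: "derives_L LC (FOr (FNeg A) (FNeg (FNeg A)))"
proof -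
  interpret superintuitionistic LC
    unfolding LC_def by (rule superintuitionistic_hilbert)
  have "POr (PImp (PVar 0) (PNeg (PVar 0))) (PImp (PNeg (PVar 0)) (PVar 0)) \<in> LC"
    unfolding LC_def by (rule hilbert.extra) blast
  from derives.thm_inst[OF this, of False "\<lambda>_. A"]
  have "derives_from LC {} (FOr (FImp A (FNeg A)) (FImp (FNeg A) A))"
    by (simp add: PNeg_def FNeg_def derives_from.base)
  moreover have "derives_from LC {FImp A (FNeg A)} (FNeg A)"
    by (rule derives_from_negI)
      (meson derives_from.mp derives_from_negE derives_from_assm derives_from_weaken)
  moreover have "derives_from LC {FImp (FNeg A) A} (FNeg (FNeg A))"
    by (rule derives_from_negI)
      (meson derives_from.mp derives_from_negE derives_from_assm derives_from_weaken)
  ultimately have "derives_from LC {} (FOr (FNeg A) (FNeg (FNeg A)))"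
    by (meson derives_from_disjE derives_from_disjI1 derives_from_disjI2)
  then show ?thesis by (rule derives_from_empty)
qed

theorem mainTheorem6:
  shows "(\<forall>L. intermediate_logic L \<and> (\<forall>A. POr (PNeg A) (PNeg (PNeg A)) \<in> L)
            \<longrightarrow> first_et_theorem_neg L)
         \<and> first_et_theorem_neg KC \<and> first_et_theorem_neg LC"
proof (intro conjI allI impI)
  fix L assume "intermediate_logic L \<and> (\<forall>A. POr (PNeg A) (PNeg (PNeg A)) \<in> L)"
  then show "first_et_theorem_neg L"
    by (intro superintuitionistic.first_et_theorem_neg_if_wem derives_wem)
      (auto simp: intermediate_logic_def superintuitionistic_def)
next
  show "first_et_theorem_neg KC"
    using superintuitionistic.first_et_theorem_neg_if_wem[OF _ KC_subset_CPC KC_wem]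
      superintuitionistic_hilbert
    by (simp add: KC_def)
next
  show "first_et_theorem_neg LC"
    using superintuitionistic.first_et_theorem_neg_if_wem[OF _ LC_subset_CPC LC_wem]
      superintuitionistic_hilbert
    by (simp add: LC_def)
qed

end
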